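(* For every $\varepsilon>0$ there exists $n_0$ such that for all $n\ge n_0$ the following holds. Let $\mathcal F\subseteq 2^{[n]}$ be a family all of whose sets have size in $[n/2-n^{2/3},\,n/2+n^{2/3}]$. If for every $F\in\mathcal F$ we have $\nabla^j_{\mathcal F}(F)\le\varepsilon n^4$ for all $j\ge4$, then $|\mathcal F|\le(4+400\varepsilon)\binom{n}{\lfloor n/2\rfloor}$.
   Context: $\nabla^j_{\mathcal F}(F):=|\{G\in\mathcal F:\ F\subseteq G,\ |G|=|F|+j\}|$. *)

theory Defs
  imports Complex_Main
begin

definition up_degree :: "'a set set \<Rightarrow> nat \<Rightarrow> 'a set \<Rightarrow> nat" where
  "up_degree FF j F = card {G \<in> FF. F \<subseteq> G \<and> card G = card F + j}"

end

theory Submission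
  imports Defs "HOL-Combinatorics.Multiset_Permutations" "HOL-Real_Asymp.Real_Asymp"
begin

(* A permutation of the ground set A (with |A| = n) encodes a maximal chain, and a set of size k
   lies on exactly k! (n - k)! of them. On a chain whose first member of FF is F, at most d members
   of FF have size below |F| + d, and every other member is a superset G of F with |G| >= |F| + d;
   among the chains starting their FF-part at F, the fraction passing through G is
   1 / C(n - |F|, |G| - |F|). Double counting gives the LYM-type inequality
   sum_F 1 / C(n, |F|) <= d + K, where K bounds these weights summed over G.
   With d = 4, grouping the G by |G| - |F| = j bounds K by eps n^4 sum_j 1 / C(m, j) with
   m >= n/2 - n^(2/3) and 4 <= j <= 2 n^(2/3); this sum is dominated by the term j = 4,
   about 384 / n^4, so K <= 400 eps for large n. *)

definition on_chain :: "'a list \<Rightarrow> 'a set \<Rightarrow> bool" where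
  "on_chain \<sigma> F \<longleftrightarrow> set (take (card F) \<sigma>) = F"

definition first_on_chain :: "'a set set \<Rightarrow> 'a list \<Rightarrow> 'a set \<Rightarrow> bool" where
  "first_on_chain FF \<sigma> F \<longleftrightarrow>
     F \<in> FF \<and> on_chain \<sigma> F \<and> (\<forall>i<card F. set (take i \<sigma>) \<notin> FF)"

definition far_supersets :: "'a set set \<Rightarrow> nat \<Rightarrow> 'a set \<Rightarrow> 'a set set" where
  "far_supersets FF d F = {G \<in> FF. F \<subseteq> G \<and> card F + d \<le> card G}"

lemma card_permutations_prefix_split:
  assumes "F \<subseteq> A"
  shows "card {xs \<in> permutations_of_set A. set (take (card F) xs) = F \<and> P (take (card F) xs) \<and> Q (drop (card F) xs)}
       = card {ys \<in> permutations_of_set F. P ys} * card {zs \<in> permutations_of_set (A - F). Q zs}"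
    (is "card ?S = card ?L * card ?R")
proof -
  have drop_perm: "drop (card F) xs \<in> permutations_of_set (A - F)"
    if "xs \<in> permutations_of_set A" "set (take (card F) xs) = F" for xs
  proof -
    have "set xs = F \<union> set (drop (card F) xs)"
      using that(2) by (metis append_take_drop_id set_append)
    moreover have "F \<inter> set (drop (card F) xs) = {}"
      using that set_take_disj_set_drop_if_distinct[of xs "card F" "card F"]
      by (auto simp: permutations_of_set_def)
    ultimately show ?thesis
      using that(1) by (auto simp: permutations_of_set_def)
  qed
  have "bij_betw (\<lambda>xs. (take (card F) xs, drop (card F) xs)) ?S (?L \<times> ?R)"
    by (rule bij_betw_byWitness[where f' = "\<lambda>(ys, zs). ys @ zs"])
      (use assms drop_perm in
        \<open>auto simp: permutations_of_set_def distinct_card dest: length_finite_permutations_of_set\<close>)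
  then show ?thesis
    by (simp add: bij_betw_same_card card_cartesian_product)
qed

lemma card_permutations_on_chain:
  assumes "finite A" "F \<subseteq> A"
  shows "card {\<sigma> \<in> permutations_of_set A. on_chain \<sigma> F} = fact (card F) * fact (card A - card F)"
  using card_permutations_prefix_split[OF assms(2), of "\<lambda>_. True" "\<lambda>_. True"] assms
  by (simp add: on_chain_def card_Diff_subset finite_subset)

lemma on_chain_subset: "on_chain \<sigma> F \<Longrightarrow> on_chain \<sigma> G \<Longrightarrow> card F \<le> card G \<Longrightarrow> F \<subseteq> G"
  unfolding on_chain_def by (metis set_take_subset_set_take)

lemma first_on_chain_card_le:
  "first_on_chain FF \<sigma> F \<Longrightarrow> G \<in> FF \<Longrightarrow> on_chain \<sigma> G \<Longrightarrow> card F \<le> card G"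
  unfolding first_on_chain_def on_chain_def by (metis not_le)

lemma first_on_chain_unique: "first_on_chain FF \<sigma> F \<Longrightarrow> first_on_chain FF \<sigma> G \<Longrightarrow> F = G"
  by (metis first_on_chain_card_le first_on_chain_def on_chain_def le_antisym)

lemma exists_first_on_chain:
  assumes "distinct \<sigma>" "F \<in> FF" "on_chain \<sigma> F"
  shows "\<exists>F0. first_on_chain FF \<sigma> F0"
proof -
  define i where "i = (LEAST i. set (take i \<sigma>) \<in> FF)"
  have "set (take (card F) \<sigma>) \<in> FF"
    using assms(2,3) by (simp add: on_chain_def)
  then have i_in: "set (take i \<sigma>) \<in> FF" and "i \<le> card F"
    unfolding i_def by (auto intro: LeastI Least_le)
  have "card F \<le> length \<sigma>"
    using assms(1,3) unfolding on_chain_def by (metis distinct_card nat_le_linear take_all)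
  with \<open>i \<le> card F\<close> have "card (set (take i \<sigma>)) = i"
    using assms(1) by (simp add: distinct_card)
  with i_in have "first_on_chain FF \<sigma> (set (take i \<sigma>))"
    unfolding first_on_chain_def on_chain_def i_def by (auto dest: not_less_Least)
  then show ?thesis ..
qed

lemma card_on_chain_le:
  assumes "finite FF" "first_on_chain FF \<sigma> F"
  shows "card {G \<in> FF. on_chain \<sigma> G} \<le> d + card {G \<in> far_supersets FF d F. on_chain \<sigma> G}"
proof -
  let ?near = "{G \<in> FF. on_chain \<sigma> G \<and> card G < card F + d}"
  let ?far = "{G \<in> far_supersets FF d F. on_chain \<sigma> G}"
  have "inj_on card ?near"
    by (rule inj_onI) (simp add: on_chain_def)
  then have "card ?near = card (card ` ?near)"
    by (simp add: card_image)
  also have "\<dots> \<le> card {card F..<card F + d}"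
    using first_on_chain_card_le[OF assms(2)] by (intro card_mono) auto
  finally have near: "card ?near \<le> d"
    by simp
  have "{G \<in> FF. on_chain \<sigma> G} \<subseteq> ?near \<union> ?far"
  proof
    fix G assume G: "G \<in> {G \<in> FF. on_chain \<sigma> G}"
    then have "card F \<le> card G"
      using first_on_chain_card_le[OF assms(2)] by blast
    with G assms(2) have "F \<subseteq> G"
      using on_chain_subset by (auto simp: first_on_chain_def)
    with G show "G \<in> ?near \<union> ?far"
      by (auto simp: far_supersets_def)
  qed
  then have "card {G \<in> FF. on_chain \<sigma> G} \<le> card (?near \<union> ?far)"
    using assms(1) by (intro card_mono) (auto simp: far_supersets_def)
  also have "\<dots> \<le> card ?near + card ?far"
    by (rule card_Un_le)
  finally show ?thesis
    using near by simp
qed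

lemma card_first_on_chain_through:
  assumes "finite A" "F \<subseteq> G" "G \<subseteq> A"
  shows "card {\<sigma> \<in> permutations_of_set A. first_on_chain FF \<sigma> F \<and> on_chain \<sigma> G}
           * (card A - card F choose (card G - card F))
         = card {\<sigma> \<in> permutations_of_set A. first_on_chain FF \<sigma> F}"
proof -
  define good where "good ys \<longleftrightarrow> F \<in> FF \<and> (\<forall>i<card F. set (take i ys) \<notin> FF)" for ys
  have first_iff:
    "first_on_chain FF \<sigma> F \<longleftrightarrow> set (take (card F) \<sigma>) = F \<and> good (take (card F) \<sigma>)" for \<sigma>
    by (auto simp: first_on_chain_def on_chain_def good_def min_def)
  define j where "j = card G - card F"
  define m where "m = card A - card F"
  have FA: "F \<subseteq> A" and finG: "finite G"
    using assms finite_subset by blast+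
  have cardG: "card G = card F + j" and cardGF: "card (G - F) = j" and "j \<le> m"
    using assms finG by (auto simp: j_def m_def card_Diff_subset finite_subset card_mono diff_le_mono)
  have on_chain_G: "on_chain \<sigma> G \<longleftrightarrow> set (take j (drop (card F) \<sigma>)) = G - F"
    if "\<sigma> \<in> permutations_of_set A" "set (take (card F) \<sigma>) = F" for \<sigma>
  proof -
    have "set (take (card G) \<sigma>) = F \<union> set (take j (drop (card F) \<sigma>))"
      using that(2) by (simp add: cardG take_add)
    moreover have "F \<inter> set (take j (drop (card F) \<sigma>)) = {}"
      using that set_take_disj_set_drop_if_distinct[of \<sigma> "card F" "card F"] set_take_subset
      by (fastforce simp: permutations_of_set_def)
    ultimately show ?thesis
      using assms(2) by (auto simp: on_chain_def)
  qed
  have through: "card {\<sigma> \<in> permutations_of_set A. first_on_chain FF \<sigma> F \<and> on_chain \<sigma> G}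
      = card {ys \<in> permutations_of_set F. good ys} * (fact j * fact (m - j))"
  proof -
    have "{\<sigma> \<in> permutations_of_set A. first_on_chain FF \<sigma> F \<and> on_chain \<sigma> G}
        = {\<sigma> \<in> permutations_of_set A. set (take (card F) \<sigma>) = F \<and> good (take (card F) \<sigma>)
             \<and> set (take j (drop (card F) \<sigma>)) = G - F}"
      using on_chain_G by (auto simp: first_iff)
    also have "card \<dots> = card {ys \<in> permutations_of_set F. good ys}
        * card {zs \<in> permutations_of_set (A - F). set (take j zs) = G - F}"
      by (rule card_permutations_prefix_split[OF FA])
    also have "card {zs \<in> permutations_of_set (A - F). set (take j zs) = G - F} = fact j * fact (m - j)"
      using card_permutations_on_chain[of "A - F" "G - F"] assms FA
      by (auto simp: on_chain_def cardGF m_def card_Diff_subset finite_subset)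
    finally show ?thesis .
  qed
  have all: "card {\<sigma> \<in> permutations_of_set A. first_on_chain FF \<sigma> F}
      = card {ys \<in> permutations_of_set F. good ys} * fact m"
  proof -
    have "card {\<sigma> \<in> permutations_of_set A. first_on_chain FF \<sigma> F}
        = card {ys \<in> permutations_of_set F. good ys} * card (permutations_of_set (A - F))"
      using card_permutations_prefix_split[OF FA, of good "\<lambda>_. True"]
      by (simp add: first_iff)
    then show ?thesis
      using assms FA by (simp add: m_def card_Diff_subset finite_subset)
  qed
  show ?thesis
    unfolding through all j_def[symmetric] m_def[symmetric]
    using binomial_fact_lemma[OF \<open>j \<le> m\<close>] by (simp add: mult.assoc)
qed

lemma sum_card_first_on_chain_le:
  assumes "finite FF"
  shows "(\<Sum>F\<in>FF. card {\<sigma> \<in> permutations_of_set A. first_on_chain FF \<sigma> F})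
       \<le> card (permutations_of_set A)"
proof -
  let ?P = "permutations_of_set A"
  have "(\<Sum>F\<in>FF. card {\<sigma> \<in> ?P. first_on_chain FF \<sigma> F})
      = (\<Sum>\<sigma>\<in>?P. card {F \<in> FF. first_on_chain FF \<sigma> F})"
    by (rule sum_multicount_gen) (use assms in auto)
  also have "\<dots> \<le> (\<Sum>\<sigma>\<in>?P. 1)"
    by (intro sum_mono) (auto simp: card_le_Suc0_iff_eq assms dest: first_on_chain_unique)
  finally show ?thesis
    by simp
qed

lemma sum_card_on_chain_le:
  assumes "finite FF"
  shows "(\<Sum>\<sigma>\<in>permutations_of_set A. card {F \<in> FF. on_chain \<sigma> F})
     \<le> d * card (permutations_of_set A)
       + (\<Sum>F\<in>FF. \<Sum>G\<in>far_supersets FF d F.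
            card {\<sigma> \<in> permutations_of_set A. first_on_chain FF \<sigma> F \<and> on_chain \<sigma> G})"
proof -
  let ?P = "permutations_of_set A"
  let ?far_on = "\<lambda>\<sigma> F. card {G \<in> far_supersets FF d F. on_chain \<sigma> G}"
  have chain:
    "card {F \<in> FF. on_chain \<sigma> F} \<le> d + (\<Sum>F\<in>{F \<in> FF. first_on_chain FF \<sigma> F}. ?far_on \<sigma> F)"
    if "\<sigma> \<in> ?P" for \<sigma>
  proof (cases "\<exists>F0. first_on_chain FF \<sigma> F0")
    case True
    then obtain F0 where F0: "first_on_chain FF \<sigma> F0" ..
    then have "{F \<in> FF. first_on_chain FF \<sigma> F} = {F0}"
      using first_on_chain_unique by (auto simp: first_on_chain_def)
    then show ?thesis
      using card_on_chain_le[OF assms F0] by simp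
  next
    case False
    then have no_member: "{F \<in> FF. on_chain \<sigma> F} = {}"
      using exists_first_on_chain[of \<sigma> _ FF] that by (auto simp: permutations_of_set_def)
    show ?thesis
      unfolding no_member by simp
  qed
  have finite_far: "finite (far_supersets FF d F)" for F
    using assms by (simp add: far_supersets_def)
  have "(\<Sum>\<sigma>\<in>?P. card {F \<in> FF. on_chain \<sigma> F})
      \<le> (\<Sum>\<sigma>\<in>?P. d + (\<Sum>F\<in>{F \<in> FF. first_on_chain FF \<sigma> F}. ?far_on \<sigma> F))"
    using chain by (rule sum_mono)
  also have "\<dots>
      = d * card ?P + (\<Sum>F\<in>FF. \<Sum>\<sigma>\<in>{\<sigma> \<in> ?P. first_on_chain FF \<sigma> F}. ?far_on \<sigma> F)"
    by (simp add: sum.distrib sum.swap_restrict[OF _ assms])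
  also have "\<dots> = d * card ?P + (\<Sum>F\<in>FF. \<Sum>G\<in>far_supersets FF d F.
                    card {\<sigma> \<in> ?P. first_on_chain FF \<sigma> F \<and> on_chain \<sigma> G})"
  proof (intro arg_cong[where f = "(+) (d * card ?P)"] sum.cong refl)
    fix F
    show "(\<Sum>\<sigma>\<in>{\<sigma> \<in> ?P. first_on_chain FF \<sigma> F}. ?far_on \<sigma> F)
        = (\<Sum>G\<in>far_supersets FF d F. card {\<sigma> \<in> ?P. first_on_chain FF \<sigma> F \<and> on_chain \<sigma> G})"
      by (rule sum_multicount_gen) (use finite_far in auto)
  qed
  finally show ?thesis .
qed

lemma sum_fact_eq_sum_card_on_chain:
  assumes "finite A" "FF \<subseteq> Pow A"
  shows "(\<Sum>F\<in>FF. fact (card F) * fact (card A - card F))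
       = (\<Sum>\<sigma>\<in>permutations_of_set A. card {F \<in> FF. on_chain \<sigma> F})"
proof -
  have "finite FF"
    using assms by (meson finite_Pow_iff finite_subset)
  have "(\<Sum>F\<in>FF. fact (card F) * fact (card A - card F))
      = (\<Sum>F\<in>FF. card {\<sigma> \<in> permutations_of_set A. on_chain \<sigma> F})"
    using card_permutations_on_chain[OF assms(1)] assms(2) by (intro sum.cong) auto
  also have "\<dots> = (\<Sum>\<sigma>\<in>permutations_of_set A. card {F \<in> FF. on_chain \<sigma> F})"
    by (rule sum_multicount_gen) (use \<open>finite FF\<close> in auto)
  finally show ?thesis .
qed

lemma sum_card_first_on_chain_through:
  assumes "finite A" "FF \<subseteq> Pow A"
  shows "real (\<Sum>G\<in>far_supersets FF d F.
             card {\<sigma> \<in> permutations_of_set A. first_on_chain FF \<sigma> F \<and> on_chain \<sigma> G})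
       = real (card {\<sigma> \<in> permutations_of_set A. first_on_chain FF \<sigma> F})
         * (\<Sum>G\<in>far_supersets FF d F. 1 / real (card A - card F choose (card G - card F)))"
  unfolding of_nat_sum sum_distrib_left
proof (intro sum.cong refl)
  fix G assume "G \<in> far_supersets FF d F"
  then have "F \<subseteq> G" "G \<subseteq> A" "card G \<le> card A"
    using assms by (auto simp: far_supersets_def intro: card_mono)
  then show "real (card {\<sigma> \<in> permutations_of_set A. first_on_chain FF \<sigma> F \<and> on_chain \<sigma> G})
      = real (card {\<sigma> \<in> permutations_of_set A. first_on_chain FF \<sigma> F})
        * (1 / real (card A - card F choose (card G - card F)))"
    using card_first_on_chain_through[OF assms(1), of F G FF]
    by (auto simp: field_simps diff_le_mono simp flip: of_nat_mult)
qed

lemma inverse_binomial_eq_fact: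
  "k \<le> n \<Longrightarrow> 1 / real (n choose k) = real (fact k * fact (n - k)) / fact n"
  by (simp add: binomial_fact)

lemma sum_inverse_binomial_le_of_far_supersets:
  fixes FF :: "'a set set" and K :: real
  assumes "finite A" "FF \<subseteq> Pow A" "K \<ge> 0"
    and far: "\<And>F. F \<in> FF \<Longrightarrow>
      (\<Sum>G\<in>far_supersets FF d F. 1 / real (card A - card F choose (card G - card F))) \<le> K"
  shows "(\<Sum>F\<in>FF. 1 / real (card A choose card F)) \<le> d + K"
proof -
  let ?P = "permutations_of_set A"
  let ?n = "card A"
  let ?first = "\<lambda>F. card {\<sigma> \<in> ?P. first_on_chain FF \<sigma> F}"
  have "finite FF"
    using assms(1,2) by (meson finite_Pow_iff finite_subset)
  have card_le: "card F \<le> ?n" if "F \<in> FF" for F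
    using that assms(1,2) by (auto intro: card_mono)
  have "(\<Sum>F\<in>FF. real (fact (card F) * fact (?n - card F)))
      = real (\<Sum>\<sigma>\<in>?P. card {F \<in> FF. on_chain \<sigma> F})"
    unfolding sum_fact_eq_sum_card_on_chain[OF assms(1,2), symmetric] by simp
  also have "\<dots> \<le> d * fact ?n + (\<Sum>F\<in>FF. real (\<Sum>G\<in>far_supersets FF d F.
                    card {\<sigma> \<in> ?P. first_on_chain FF \<sigma> F \<and> on_chain \<sigma> G}))"
    using sum_card_on_chain_le[OF \<open>finite FF\<close>, of A d] assms(1)
    by (simp flip: of_nat_sum of_nat_mult del: of_nat_fact)
  also have "\<dots> \<le> d * fact ?n + (\<Sum>F\<in>FF. real (?first F) * K)"
    unfolding sum_card_first_on_chain_through[OF assms(1,2)]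
    using far by (intro add_left_mono sum_mono mult_left_mono) auto
  also have "\<dots> \<le> d * fact ?n + fact ?n * K"
  proof -
    have "real (\<Sum>F\<in>FF. ?first F) \<le> fact ?n"
      using sum_card_first_on_chain_le[OF \<open>finite FF\<close>, of A] assms(1)
      by (metis card_permutations_of_set of_nat_fact of_nat_le_iff)
    then show ?thesis
      using assms(3) by (simp add: mult_right_mono flip: sum_distrib_right)
  qed
  finally have "(\<Sum>F\<in>FF. real (fact (card F) * fact (?n - card F))) / fact ?n \<le> d + K"
    by (simp add: field_simps)
  then show ?thesis
    using card_le by (simp add: inverse_binomial_eq_fact sum_divide_distrib)
qed

lemma card_le_of_sum_inverse_binomial_le:
  assumes "finite A" "FF \<subseteq> Pow A" "(\<Sum>F\<in>FF. 1 / real (card A choose card F)) \<le> c"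
  shows "real (card FF) \<le> c * real (card A choose (card A div 2))"
proof -
  have "real (card FF) / real (card A choose (card A div 2)) = (\<Sum>F\<in>FF. 1 / real (card A choose (card A div 2)))"
    by simp
  also have "\<dots> \<le> (\<Sum>F\<in>FF. 1 / real (card A choose card F))"
  proof (intro sum_mono divide_left_mono)
    fix F assume "F \<in> FF"
    then have "card F \<le> card A"
      using assms(1,2) by (auto intro: card_mono)
    then show "real (card A choose card F) \<le> real (card A choose (card A div 2))"
      and "0 < real (card A choose (card A div 2)) * real (card A choose card F)"
      using binomial_maximum[of "card A" "card F"] by auto
  qed simp
  finally have "real (card FF) \<le> (\<Sum>F\<in>FF. 1 / real (card A choose card F)) * (card A choose (card A div 2))"
    by (simp add: divide_le_eq)
  also have "\<dots> \<le> c * (card A choose (card A div 2))"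
    using assms(3) by (rule mult_right_mono) simp
  finally show ?thesis .
qed

lemma inverse_binomial_4_le:
  assumes "4 \<le> m"
  shows "1 / real (m choose 4) \<le> 24 / (real m - 3) ^ 4"
proof -
  have "(real m - 3) ^ 4 \<le> real m * (real m - 1) * (real m - 2) * (real m - 3)"
    unfolding power4_eq_xxxx using assms by (intro mult_mono) auto
  also have "\<dots> = 24 * real (m choose 4)"
    by (simp add: binomial_gbinomial gbinomial_pochhammer pochhammer_prod numeral_eq_Suc
        prod.atLeast0_lessThan_Suc algebra_simps)
  finally have "(real m - 3) ^ 4 / 24 \<le> real (m choose 4)"
    by simp
  then have "1 / real (m choose 4) \<le> 1 / ((real m - 3) ^ 4 / 24)"
    using assms by (intro divide_left_mono) auto
  then show ?thesis
    by simp
qed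

lemma inverse_binomial_le_of_5_le:
  assumes "5 \<le> j" "2 * j \<le> m"
  shows "1 / real (m choose j) \<le> 3125 / real m ^ 5"
proof -
  have "(real m / 5) ^ 5 \<le> real (m choose 5)"
    using assms binomial_ge_n_over_k_pow_k[of 5 m] by simp
  also have "\<dots> \<le> real (m choose j)"
    using assms by (simp add: binomial_mono)
  finally have "1 / real (m choose j) \<le> 1 / (real m / 5) ^ 5"
    using assms by (intro divide_left_mono) auto
  then show ?thesis
    by (simp add: power_divide)
qed

lemma sum_inverse_binomial_le:
  assumes "finite Js" "\<forall>j\<in>Js. 4 \<le> j \<and> 2 * j \<le> m"
  shows "(\<Sum>j\<in>Js. 1 / real (m choose j)) \<le> 24 / (real m - 3) ^ 4 + real (card Js) * 3125 / real m ^ 5"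
proof -
  have "(\<Sum>j\<in>Js. 1 / real (m choose j))
      \<le> (\<Sum>j\<in>Js. (if j = 4 then 24 / (real m - 3) ^ 4 else 0) + 3125 / real m ^ 5)"
  proof (rule sum_mono)
    fix j assume "j \<in> Js"
    with assms(2) have "4 \<le> j" "2 * j \<le> m"
      by auto
    then show "1 / real (m choose j) \<le> (if j = 4 then 24 / (real m - 3) ^ 4 else 0) + 3125 / real m ^ 5"
      using inverse_binomial_4_le[of m] inverse_binomial_le_of_5_le[of j m] by (auto intro: add_increasing2)
  qed
  also have "\<dots> \<le> 24 / (real m - 3) ^ 4 + real (card Js) * 3125 / real m ^ 5"
    using assms(1) by (simp add: sum.distrib sum.delta)
  finally show ?thesis .
qed

lemma eventually_weighted_inverse_binomial_bound:
  "eventually (\<lambda>x::real. x ^ 4 * (24 / (x / 2 - x powr (2/3) - 3) ^ 4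
      + 2 * x powr (2/3) * 3125 / (x / 2 - x powr (2/3)) ^ 5) < 400) at_top"
proof -
  have "((\<lambda>x::real. x / (x / 2 - x powr (2/3) - 3)) \<longlongrightarrow> 2) at_top"
    by real_asymp
  moreover have "((\<lambda>x::real. x ^ 4 * x powr (2/3) / (x / 2 - x powr (2/3)) ^ 5) \<longlongrightarrow> 0) at_top"
    by real_asymp
  ultimately have "((\<lambda>x::real. 24 * (x / (x / 2 - x powr (2/3) - 3)) ^ 4
      + 6250 * (x ^ 4 * x powr (2/3) / (x / 2 - x powr (2/3)) ^ 5)) \<longlongrightarrow> 24 * 2 ^ 4 + 6250 * 0) at_top"
    by (intro tendsto_intros)
  then have "eventually (\<lambda>x::real. 24 * (x / (x / 2 - x powr (2/3) - 3)) ^ 4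
      + 6250 * (x ^ 4 * x powr (2/3) / (x / 2 - x powr (2/3)) ^ 5) < 400) at_top"
    by (rule order_tendstoD) simp
  then show ?thesis
    by (simp add: field_simps)
qed

lemma eventually_sum_inverse_binomial_le_400:
  "eventually (\<lambda>n. \<forall>m Js. finite Js \<longrightarrow> real n / 2 - real n powr (2/3) \<le> real m \<longrightarrow>
      (\<forall>j\<in>Js. 4 \<le> j \<and> real j \<le> 2 * real n powr (2/3)) \<longrightarrow>
      real n ^ 4 * (\<Sum>j\<in>Js. 1 / real (m choose j)) \<le> 400) sequentially"
proof -
  have "eventually (\<lambda>x::real. x ^ 4 * (24 / (x / 2 - x powr (2/3) - 3) ^ 4
      + 2 * x powr (2/3) * 3125 / (x / 2 - x powr (2/3)) ^ 5) < 400
      \<and> 4 * x powr (2/3) + 4 \<le> x / 2 - x powr (2/3)) at_top"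
    using eventually_weighted_inverse_binomial_bound by (rule eventually_conj) real_asymp
  from eventually_compose_filterlim[OF this filterlim_real_sequentially]
  show ?thesis
  proof (rule eventually_mono, intro allI impI)
    fix n m :: nat and Js :: "nat set"
    define t where "t = real n powr (2/3)"
    define y where "y = real n / 2 - t"
    assume "real n ^ 4 * (24 / (real n / 2 - real n powr (2/3) - 3) ^ 4
        + 2 * real n powr (2/3) * 3125 / (real n / 2 - real n powr (2/3)) ^ 5) < 400
      \<and> 4 * real n powr (2/3) + 4 \<le> real n / 2 - real n powr (2/3)"
    then have bound: "real n ^ 4 * (24 / (y - 3) ^ 4 + 2 * t * 3125 / y ^ 5) < 400"
      and large: "4 * t + 4 \<le> y"
      by (simp_all add: t_def y_def)
    assume "finite Js" and m: "real n / 2 - real n powr (2/3) \<le> real m"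
      and Js: "\<forall>j\<in>Js. 4 \<le> j \<and> real j \<le> 2 * real n powr (2/3)"
    have "t \<ge> 0" and "y \<le> real m"
      using m by (simp_all add: t_def y_def)
    have "card Js \<le> nat \<lfloor>2 * t\<rfloor>"
    proof -
      have "Js \<subseteq> {1..nat \<lfloor>2 * t\<rfloor>}"
        using Js by (auto simp: t_def le_nat_floor)
      then show ?thesis
        using card_mono[of "{1..nat \<lfloor>2 * t\<rfloor>}" Js] by simp
    qed
    then have card_Js: "real (card Js) \<le> 2 * t"
      using \<open>t \<ge> 0\<close> by linarith
    have "\<forall>j\<in>Js. 4 \<le> j \<and> 2 * j \<le> m"
      using Js large \<open>y \<le> real m\<close> by (auto simp: t_def)
    with \<open>finite Js\<close> have "(\<Sum>j\<in>Js. 1 / real (m choose j))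
        \<le> 24 / (real m - 3) ^ 4 + real (card Js) * 3125 / real m ^ 5"
      by (rule sum_inverse_binomial_le)
    also have "\<dots> \<le> 24 / (y - 3) ^ 4 + 2 * t * 3125 / y ^ 5"
      using large \<open>t \<ge> 0\<close> \<open>y \<le> real m\<close> card_Js
      by (intro add_mono divide_left_mono frac_le power_mono mult_right_mono) auto
    finally show "real n ^ 4 * (\<Sum>j\<in>Js. 1 / real (m choose j)) \<le> 400"
      using bound by (smt (verit) mult_left_mono zero_le_power of_nat_0_le_iff)
  qed
qed

lemma sum_far_supersets_le_up_degree:
  fixes f :: "nat \<Rightarrow> real"
  assumes "finite FF" "\<And>j. d \<le> j \<Longrightarrow> real (up_degree FF j F) \<le> D" "\<And>j. 0 \<le> f j"
  shows "(\<Sum>G\<in>far_supersets FF d F. f (card G - card F))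
       \<le> D * (\<Sum>j\<in>(\<lambda>G. card G - card F) ` far_supersets FF d F. f j)"
proof -
  let ?S = "far_supersets FF d F"
  let ?h = "\<lambda>G. card G - card F"
  have finite_S: "finite ?S"
    using assms(1) by (simp add: far_supersets_def)
  have "(\<Sum>G\<in>?S. f (?h G)) = (\<Sum>j\<in>?h ` ?S. \<Sum>G\<in>{G \<in> ?S. ?h G = j}. f (?h G))"
    using finite_S by (rule sum.image_gen)
  also have "\<dots> = (\<Sum>j\<in>?h ` ?S. real (card {G \<in> ?S. ?h G = j}) * f j)"
    by (intro sum.cong) auto
  also have "\<dots> \<le> (\<Sum>j\<in>?h ` ?S. D * f j)"
  proof (intro sum_mono mult_right_mono)
    fix j assume "j \<in> ?h ` ?S"
    then have "d \<le> j"
      by (auto simp: far_supersets_def)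
    then have "{G \<in> ?S. ?h G = j} = {G \<in> FF. F \<subseteq> G \<and> card G = card F + j}"
      by (auto simp: far_supersets_def)
    then show "real (card {G \<in> ?S. ?h G = j}) \<le> D"
      using assms(2)[OF \<open>d \<le> j\<close>] by (simp add: up_degree_def)
  qed (use assms(3) in simp)
  finally show ?thesis
    by (simp add: sum_distrib_left)
qed

lemma sum_far_supersets_inverse_binomial_le:
  fixes d :: nat and t D c \<epsilon> :: real
  assumes "finite A" "FF \<subseteq> Pow A" "F \<in> FF" "\<epsilon> \<ge> 0"
    and band: "\<forall>F\<in>FF. real (card A) / 2 - t \<le> real (card F) \<and> real (card F) \<le> real (card A) / 2 + t"
    and up_degree: "\<forall>j\<ge>d. real (up_degree FF j F) \<le> \<epsilon> * D"
    and inverse_binomial_sums: "\<And>m Js. finite Js \<Longrightarrow> real (card A) / 2 - t \<le> real m \<Longrightarrow>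
      \<forall>j\<in>Js. d \<le> j \<and> real j \<le> 2 * t \<Longrightarrow> D * (\<Sum>j\<in>Js. 1 / real (m choose j)) \<le> c"
  shows "(\<Sum>G\<in>far_supersets FF d F. 1 / real (card A - card F choose (card G - card F))) \<le> c * \<epsilon>"
proof -
  let ?J = "(\<lambda>G. card G - card F) ` far_supersets FF d F"
  have "finite FF"
    using assms(1,2) by (meson finite_Pow_iff finite_subset)
  have "(\<Sum>G\<in>far_supersets FF d F. 1 / real (card A - card F choose (card G - card F)))
      \<le> \<epsilon> * D * (\<Sum>j\<in>?J. 1 / real (card A - card F choose j))"
    using up_degree \<open>finite FF\<close> by (intro sum_far_supersets_le_up_degree) auto
  also have "\<dots> \<le> \<epsilon> * c"
    unfolding mult.assoc
  proof (intro mult_left_mono inverse_binomial_sums)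
    have "card F \<le> card A" and "real (card F) \<le> real (card A) / 2 + t"
      using assms(1-3) band by (auto intro: card_mono)
    then show "real (card A) / 2 - t \<le> real (card A - card F)"
      by (simp add: of_nat_diff)
    show "\<forall>j\<in>?J. d \<le> j \<and> real j \<le> 2 * t"
    proof
      fix j assume "j \<in> ?J"
      then obtain G where "G \<in> FF" "card F + d \<le> card G" "j = card G - card F"
        by (auto simp: far_supersets_def)
      moreover have "real (card G) \<le> real (card A) / 2 + t" "real (card A) / 2 - t \<le> real (card F)"
        using band assms(3) \<open>G \<in> FF\<close> by auto
      ultimately show "d \<le> j \<and> real j \<le> 2 * t"
        by (simp add: of_nat_diff)
    qed
  qed (use \<open>finite FF\<close> \<open>\<epsilon> \<ge> 0\<close> in \<open>auto simp: far_supersets_def\<close>)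
  finally show ?thesis
    by (simp add: mult.commute)
qed

lemma card_le_of_up_degree_le:
  fixes d :: nat and t D c \<epsilon> :: real
  assumes "finite A" "FF \<subseteq> Pow A" "\<epsilon> \<ge> 0" "c \<ge> 0"
    and band: "\<forall>F\<in>FF. real (card A) / 2 - t \<le> real (card F) \<and> real (card F) \<le> real (card A) / 2 + t"
    and up_degree: "\<forall>F\<in>FF. \<forall>j\<ge>d. real (up_degree FF j F) \<le> \<epsilon> * D"
    and inverse_binomial_sums: "\<And>m Js. finite Js \<Longrightarrow> real (card A) / 2 - t \<le> real m \<Longrightarrow>
      \<forall>j\<in>Js. d \<le> j \<and> real j \<le> 2 * t \<Longrightarrow> D * (\<Sum>j\<in>Js. 1 / real (m choose j)) \<le> c"
  shows "real (card FF) \<le> (real d + c * \<epsilon>) * real (card A choose (card A div 2))"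
proof -
  have "(\<Sum>F\<in>FF. 1 / real (card A choose card F)) \<le> real d + c * \<epsilon>"
    using assms(1-4) up_degree
    by (intro sum_inverse_binomial_le_of_far_supersets sum_far_supersets_inverse_binomial_le[OF _ _ _ _ band])
      (auto intro: inverse_binomial_sums)
  then show ?thesis
    using card_le_of_sum_inverse_binomial_le[OF assms(1,2)] by simp
qed

theorem lemma2p5:
  "\<forall>\<epsilon>::real. \<epsilon> > 0 \<longrightarrow> (\<exists>n0::nat. \<forall>n\<ge>n0. \<forall>FF :: nat set set.
     FF \<subseteq> Pow {1..n} \<longrightarrow>
     (\<forall>F\<in>FF. real n / 2 - real n powr (2/3) \<le> real (card F) \<and>
               real (card F) \<le> real n / 2 + real n powr (2/3)) \<longrightarrow>
     (\<forall>F\<in>FF. \<forall>j\<ge>4. real (up_degree FF j F) \<le> \<epsilon> * real n ^ 4) \<longrightarrow>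
     real (card FF) \<le> (4 + 400 * \<epsilon>) * real (n choose (n div 2)))"
  using eventually_sum_inverse_binomial_le_400 unfolding eventually_sequentially
  by (intro allI impI, elim exE, intro exI allI impI card_le_of_up_degree_le[where A = "{1..n}"
      and t = "real n powr (2/3)" and d = 4 and D = "real n ^ 4" and c = 400 for n, simplified]) auto

end
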